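(* Let $\mathbbm{k}$ be an algebraically closed field of characteristic $0$, and let $\mathscr{A}_2$ be the connected cochain DG algebra whose underlying graded algebra is the free algebra $\mathbbm{k}\langle y_1,y_2,y_3\rangle$ with $|y_1|=|y_2|=|y_3|=1$, and whose differential is determined by $\partial(y_1)=y_3^2$, $\partial(y_2)=y_1y_3+y_3y_1$, $\partial(y_3)=0$ (extended by the graded Leibniz rule). Then $$H(\mathscr{A}_2)=\frac{\mathbbm{k}[\lceil y_3\rceil,\lceil y_1^2+y_2y_3+y_3y_2\rceil]}{(\lceil y_3\rceil^2 )},$$ i.e. the cohomology ring is the commutative algebra generated by $\lceil y_3\rceil$ (degree $1$) and $\lceil y_1^2+y_2y_3+y_3y_2\rceil$ (degree $2$) subject only to $\lceil y_3\rceil^2=0$.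
   Context: A cochain DG algebra is a $\mathbb{Z}$-graded algebra with a degree $1$ differential $\partial$ satisfying $\partial^2=0$ and $\partial(ab)=\partial(a)b+(-1)^{|a|}a\partial(b)$. For a cocycle $z$, $\lceil z\rceil$ denotes its cohomology class. *)

theory Defs
  imports "HOL-Computational_Algebra.Polynomial"
begin

text \<open>The free graded algebra k<y1,y2,y3> with all generators of degree 1.
  Elements are finitely supported functions from words over the generators to k.\<close>

datatype gen = Y1 | Y2 | Y3

type_synonym 'a fa = "gen list \<Rightarrow> 'a"

definition fa_carrier :: "'a::zero fa set" where
  "fa_carrier = {f. finite {w. f w \<noteq> 0}}"

definition fa_zero :: "'a::zero fa" where
  "fa_zero = (\<lambda>w. 0)"

definition fa_add :: "'a::plus fa \<Rightarrow> 'a fa \<Rightarrow> 'a fa" where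
  "fa_add f g = (\<lambda>w. f w + g w)"

definition fa_diff :: "'a::minus fa \<Rightarrow> 'a fa \<Rightarrow> 'a fa" where
  "fa_diff f g = (\<lambda>w. f w - g w)"

definition fa_smul :: "'a::times \<Rightarrow> 'a fa \<Rightarrow> 'a fa" where
  "fa_smul c f = (\<lambda>w. c * f w)"

definition word :: "gen list \<Rightarrow> 'a::{zero,one} fa" where
  "word u = (\<lambda>w. if w = u then 1 else 0)"

definition fa_mult :: "'a::comm_ring_1 fa \<Rightarrow> 'a fa \<Rightarrow> 'a fa" (infixl "\<odot>" 70) where
  "f \<odot> g = (\<lambda>w. \<Sum>i\<le>length w. f (take i w) * g (drop i w))"

definition fa_one :: "'a::comm_ring_1 fa" where
  "fa_one = word []"

definition fa_pow :: "'a::comm_ring_1 fa \<Rightarrow> nat \<Rightarrow> 'a fa" where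
  "fa_pow f n = ((\<lambda>g. f \<odot> g) ^^ n) fa_one"

definition y1 :: "'a::comm_ring_1 fa" where "y1 = word [Y1]"
definition y2 :: "'a::comm_ring_1 fa" where "y2 = word [Y2]"
definition y3 :: "'a::comm_ring_1 fa" where "y3 = word [Y3]"

fun dgen :: "gen \<Rightarrow> 'a::comm_ring_1 fa" where
  "dgen Y1 = y3 \<odot> y3"
| "dgen Y2 = fa_add (y1 \<odot> y3) (y3 \<odot> y1)"
| "dgen Y3 = fa_zero"

text \<open>Extension to words by the graded Leibniz rule (generators have degree 1):
  d(x w) = d(x) w + (-1)^1 x d(w).\<close>
fun dword :: "gen list \<Rightarrow> 'a::comm_ring_1 fa" where
  "dword [] = fa_zero"
| "dword (x # w) = fa_diff (dgen x \<odot> word w) (word [x] \<odot> dword w)"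

definition dfa :: "'a::comm_ring_1 fa \<Rightarrow> 'a fa" where
  "dfa f = (\<lambda>v. \<Sum>u\<in>{u. f u \<noteq> 0}. f u * dword u v)"

definition cocycles :: "'a::comm_ring_1 fa set" where
  "cocycles = {f \<in> fa_carrier. dfa f = fa_zero}"

definition coboundaries :: "'a::comm_ring_1 fa set" where
  "coboundaries = {dfa g | g. g \<in> fa_carrier}"

definition zz :: "'a::comm_ring_1 fa" where
  "zz = fa_add (fa_add (y1 \<odot> y1) (y2 \<odot> y3)) (y3 \<odot> y2)"

text \<open>k[a,b] is modelled as ('a poly) poly: polynomials in b with coefficients in k[a].\<close>
definition ev :: "'a::comm_ring_1 poly poly \<Rightarrow> 'a fa" where
  "ev P = (\<lambda>v. \<Sum>j\<le>degree P. \<Sum>i\<le>degree (coeff P j).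
              coeff (coeff P j) i * (fa_pow y3 i \<odot> fa_pow zz j) v)"

end

(* Coefficient functions on words carry the differential in a dual form that needs no finite
   support.  The elements y3 and zz = y1^2 + y2 y3 + y3 y2 are cocycles, y3^2 = d y1 and
   zz y3 - y3 zz = - d (y1 y2 + y2 y1); hence a |-> y3, b |-> zz is multiplicative up to
   coboundaries and kills a^2.  Every cocycle c is cohomologous to c(1) + c(y3) y3 + zz R with
   R a cocycle supported on shorter words, by a contracting homotopy that rewrites a leading
   y3 y3 as y1 and a leading y3 y1 as y2; induction on the length gives surjectivity.
   Conversely, evaluation at y1^(2j) and the alternating sum of the coefficients at
   y1^p y3 y1^(2j-p) vanish on coboundaries and read off the coefficients of b^j and a b^j. *)

theory Submission
  imports Defs "HOL-Library.Function_Algebras"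
begin

lemma fa_add_eq_plus: "fa_add f g = f + g"
  by (simp add: fa_add_def plus_fun_def)

lemma fa_diff_eq_minus: "fa_diff f g = f - g"
  by (simp add: fa_diff_def fun_diff_def)

lemma fa_zero_eq_zero: "fa_zero = 0"
  by (simp add: fa_zero_def zero_fun_def)

lemma y_eq_word: "y1 = word [Y1]" "y2 = word [Y2]" "y3 = word [Y3]"
  by (simp_all add: y1_def y2_def y3_def)

lemma word_apply: "word u w = (if w = u then 1 else 0)"
  by (simp add: word_def)

section \<open>The free algebra\<close>

lemma fa_mult_Nil: "(f \<odot> g) [] = f [] * g []"
  by (simp add: fa_mult_def)

lemma fa_mult_Cons: "(f \<odot> g) (a # w) = f [] * g (a # w) + ((\<lambda>u. f (a # u)) \<odot> g) w"
  unfolding fa_mult_def length_Cons by (subst sum.atMost_Suc_shift) simp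

lemma fa_mult_add_left: "(f + g) \<odot> h = f \<odot> h + g \<odot> h"
  by (rule ext) (simp add: fa_mult_def sum.distrib algebra_simps)

lemma fa_mult_add_right: "h \<odot> (f + g) = h \<odot> f + h \<odot> g"
  by (rule ext) (simp add: fa_mult_def sum.distrib algebra_simps)

lemma fa_mult_diff_left: "(f - g) \<odot> h = f \<odot> h - g \<odot> h"
  by (rule ext) (simp add: fa_mult_def sum_subtractf algebra_simps)

lemma fa_mult_diff_right: "h \<odot> (f - g) = h \<odot> f - h \<odot> g"
  by (rule ext) (simp add: fa_mult_def sum_subtractf algebra_simps)

lemma fa_mult_uminus_left: "(- f) \<odot> h = - (f \<odot> h)"
  by (rule ext) (simp add: fa_mult_def sum_negf)

lemma fa_mult_uminus_right: "h \<odot> (- f) = - (h \<odot> f)"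
  by (rule ext) (simp add: fa_mult_def sum_negf)

lemma fa_mult_zero_left [simp]: "0 \<odot> h = 0"
  by (rule ext) (simp add: fa_mult_def)

lemma fa_mult_zero_right [simp]: "h \<odot> 0 = 0"
  by (rule ext) (simp add: fa_mult_def)

lemma fa_mult_const_zero_left [simp]: "(\<lambda>u. 0) \<odot> h = 0"
  by (rule ext) (simp add: fa_mult_def)

lemma fa_mult_smul_left: "fa_smul c f \<odot> h = fa_smul c (f \<odot> h)"
  by (rule ext) (simp add: fa_mult_def fa_smul_def sum_distrib_left algebra_simps)

lemma fa_mult_smul_right: "h \<odot> fa_smul c f = fa_smul c (h \<odot> f)"
  by (rule ext) (simp add: fa_mult_def fa_smul_def sum_distrib_left algebra_simps)

lemma fa_mult_lincomb_left:
  "(\<lambda>w. \<Sum>u\<in>S. c u * F u w) \<odot> g = (\<lambda>w. \<Sum>u\<in>S. c u * (F u \<odot> g) w)"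
  by (rule ext) (simp add: fa_mult_def sum_distrib_right sum_distrib_left mult.assoc sum.swap[of _ S])

lemma fa_mult_assoc: "(f \<odot> g) \<odot> h = f \<odot> (g \<odot> h)"
proof
  fix w
  show "((f \<odot> g) \<odot> h) w = (f \<odot> (g \<odot> h)) w"
  proof (induction w arbitrary: f)
    case Nil
    then show ?case by (simp add: fa_mult_Nil)
  next
    case (Cons a w)
    have tail: "(\<lambda>u. (f \<odot> g) (a # u)) = fa_smul (f []) (\<lambda>u. g (a # u)) + ((\<lambda>u. f (a # u)) \<odot> g)"
      by (rule ext) (simp add: fa_mult_Cons fa_smul_def)
    have "((f \<odot> g) \<odot> h) (a # w) = (f \<odot> g) [] * h (a # w) + ((\<lambda>u. (f \<odot> g) (a # u)) \<odot> h) w"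
      by (rule fa_mult_Cons)
    also have "\<dots> = (f \<odot> g) [] * h (a # w) + (fa_smul (f []) (\<lambda>u. g (a # u)) \<odot> h) w
        + (((\<lambda>u. f (a # u)) \<odot> g) \<odot> h) w"
      unfolding tail fa_mult_add_left by simp
    also have "\<dots> = (f \<odot> (g \<odot> h)) (a # w)"
      unfolding fa_mult_Cons[of f] fa_mult_Cons[of g] fa_mult_smul_left
      by (simp add: Cons.IH fa_mult_Nil fa_smul_def algebra_simps)
    finally show ?case .
  qed
qed

lemma fa_smul_one [simp]: "fa_smul 1 f = (f :: 'a::comm_ring_1 fa)"
  by (simp add: fa_smul_def)

lemma fa_smul_smul: "fa_smul c (fa_smul d f) = fa_smul (c * d) (f :: 'a::comm_ring_1 fa)"
  by (simp add: fa_smul_def mult.assoc)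

lemma fa_smul_diff: "fa_smul c (f - g) = fa_smul c f - fa_smul c (g :: 'a::comm_ring_1 fa)"
  by (rule ext) (simp add: fa_smul_def algebra_simps)

lemma fa_smul_zero [simp]: "fa_smul c 0 = (0 :: 'a::comm_ring_1 fa)"
  by (simp add: fa_smul_def zero_fun_def)

lemma fa_smul_minus_one: "fa_smul (-1) f = - (f :: 'a::comm_ring_1 fa)"
  by (simp add: fa_smul_def fun_Compl_def)

lemma word_Nil_mult [simp]: "word [] \<odot> f = f"
  by (rule ext, case_tac x) (simp_all add: fa_mult_Nil fa_mult_Cons word_apply)

lemma word_single_mult_Nil [simp]: "(word [x] \<odot> g) [] = 0"
  by (simp add: fa_mult_Nil word_apply)

lemma word_single_mult_Cons [simp]: "(word [x] \<odot> g) (a # w) = (if a = x then g w else 0)"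
proof -
  have tail: "(\<lambda>u. word [x] (a # u)) = (if a = x then word [] else 0)"
    by (rule ext) (simp add: word_apply)
  have "(word [x] \<odot> g) (a # w) = word [x] [] * g (a # w) + ((\<lambda>u. word [x] (a # u)) \<odot> g) w"
    by (rule fa_mult_Cons)
  also have "\<dots> = (if a = x then g w else 0)"
    unfolding tail by (simp add: word_apply)
  finally show ?thesis .
qed

lemma mult_word_Nil [simp]: "f \<odot> word [] = f"
proof
  fix w
  show "(f \<odot> word []) w = f w"
    by (induction w arbitrary: f) (simp_all add: fa_mult_Nil fa_mult_Cons word_apply)
qed

lemma word_mult_word: "word u \<odot> word v = word (u @ v)"
proof
  fix w
  show "(word u \<odot> word v) w = word (u @ v) w"
  proof (induction u arbitrary: w)
    case Nil
    then show ?case by simp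
  next
    case (Cons x u)
    show ?case
    proof (cases w)
      case Nil
      then show ?thesis by (simp add: fa_mult_Nil word_apply)
    next
      case (Cons a w')
      have tail: "(\<lambda>t. word (x # u) (a # t)) = (if a = x then word u else 0)"
        by (rule ext) (simp add: word_apply)
      have "(word (x # u) \<odot> word v) w = (if a = x then (word u \<odot> word v) w' else 0)"
        unfolding \<open>w = a # w'\<close> fa_mult_Cons tail by (simp add: word_apply[of "x # u" "[]"])
      then show ?thesis
        using Cons.IH[of w'] \<open>w = a # w'\<close> by (auto simp add: word_apply[of "x # u @ v"] word_apply[of "u @ v"])
    qed
  qed
qed

lemma word_Cons: "word (x # u) = word [x] \<odot> word u"
  by (simp add: word_mult_word)

section \<open>The differential on coefficient functions\<close>

text \<open>The coefficient of a word \<open>v\<close> in \<open>d f\<close> only involves the coefficients of \<open>f\<close> at the words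
  obtained from \<open>v\<close> by contracting one adjacent pair \<open>a b\<close> to the generator whose differential
  contains the monomial \<open>a b\<close> (always with coefficient 1); moving past a letter of degree 1
  costs a sign.  Read off \<open>v\<close> from the left, this defines the differential on all coefficient
  functions, finitely supported or not.\<close>

fun contract :: "gen \<Rightarrow> gen \<Rightarrow> gen option" where
  "contract Y3 Y3 = Some Y1"
| "contract Y1 Y3 = Some Y2"
| "contract Y3 Y1 = Some Y2"
| "contract _ _ = None"

fun dfun :: "'a::comm_ring_1 fa \<Rightarrow> 'a fa" where
  "dfun f [] = 0"
| "dfun f [a] = 0"
| "dfun f (a # b # w) =
     (case contract a b of None \<Rightarrow> 0 | Some g \<Rightarrow> f (g # w)) - dfun (\<lambda>u. f (a # u)) (b # w)"

lemma dfun_add_apply: "dfun (\<lambda>w. f w + g w) v = dfun f v + dfun g v"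
  by (induction v arbitrary: f g rule: induct_list012) (simp_all split: option.split)

lemma dfun_smul_apply: "dfun (\<lambda>w. c * f w) v = c * dfun f v"
  by (induction v arbitrary: f rule: induct_list012) (simp_all add: algebra_simps split: option.split)

lemma dfun_const_zero [simp]: "dfun (\<lambda>w. 0) = 0"
proof
  fix v
  show "dfun (\<lambda>w. 0) v = 0 v"
    by (induction v rule: induct_list012) (simp_all split: option.split)
qed

lemma dfun_zero [simp]: "dfun 0 = 0"
  by (simp add: zero_fun_def)

lemma dfun_add: "dfun (f + g) = dfun f + dfun g"
  by (rule ext) (simp add: plus_fun_def dfun_add_apply)

lemma dfun_smul: "dfun (fa_smul c f) = fa_smul c (dfun f)"
  by (rule ext) (simp add: fa_smul_def dfun_smul_apply)

lemma dfun_uminus: "dfun (- f) = - dfun f"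
  using dfun_smul[of "-1" f] by (simp add: fa_smul_minus_one)

lemma dfun_diff: "dfun (f - g) = dfun f - dfun g"
  using dfun_add[of f "- g"] by (simp add: dfun_uminus)

lemma dfun_lincomb:
  "finite S \<Longrightarrow> dfun (\<lambda>w. \<Sum>u\<in>S. c u * F u w) v = (\<Sum>u\<in>S. c u * dfun (F u) v)"
  by (induction S rule: finite_induct) (simp_all add: dfun_add_apply dfun_smul_apply)

lemma dgen_mult_Nil [simp]: "(dgen x \<odot> g) [] = 0"
  by (cases x) (simp_all add: fa_mult_assoc fa_mult_add_left y_eq_word fa_add_eq_plus fa_zero_eq_zero)

lemma dgen_mult_single [simp]: "(dgen x \<odot> g) [a] = 0"
  by (cases x) (simp_all add: fa_mult_assoc fa_mult_add_left y_eq_word fa_add_eq_plus fa_zero_eq_zero)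

lemma dgen_mult_Cons_Cons [simp]:
  "(dgen x \<odot> g) (a # b # w) = (if contract a b = Some x then g w else 0)"
  by (cases x; cases a; cases b)
    (simp_all add: fa_mult_assoc fa_mult_add_left y_eq_word fa_add_eq_plus fa_zero_eq_zero)

lemma dfun_word_single_mult: "dfun (word [x] \<odot> g) = dgen x \<odot> g - word [x] \<odot> dfun g"
proof
  fix v
  show "dfun (word [x] \<odot> g) v = (dgen x \<odot> g - word [x] \<odot> dfun g) v"
  proof (induction v rule: induct_list012)
    case (3 a b w)
    have "(\<lambda>u. (word [x] \<odot> g) (a # u)) = (if a = x then g else 0)"
      by (rule ext) simp
    then show ?case
      by (simp split: option.split)
  qed simp_all
qed

lemma dfun_word_Nil [simp]: "dfun (word []) = 0"
proof
  fix v
  show "dfun (word []) v = 0 v"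
  proof (induction v rule: induct_list012)
    case (3 a b w)
    have "(\<lambda>u. word [] (a # u)) = (\<lambda>u. 0)"
      by (rule ext) (simp add: word_apply)
    then show ?case by (simp add: word_apply split: option.split)
  qed simp_all
qed

lemma dfun_word: "dfun (word u) = dword u"
proof (induction u)
  case Nil
  then show ?case by (simp add: fa_zero_eq_zero)
next
  case (Cons x u)
  then show ?case by (simp add: word_Cons[of x u] dfun_word_single_mult fa_diff_eq_minus)
qed

definition sign_twist :: "'a::comm_ring_1 fa \<Rightarrow> 'a fa" where
  "sign_twist f = (\<lambda>w. (-1) ^ length w * f w)"

lemma dfun_word_mult:
  "dfun (word u \<odot> g) = dfun (word u) \<odot> g + fa_smul ((-1) ^ length u) (word u \<odot> dfun g)"
proof (induction u arbitrary: g)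
  case Nil
  then show ?case by (simp add: fa_smul_def)
next
  case (Cons x u)
  have "dfun (word (x # u) \<odot> g) = dgen x \<odot> (word u \<odot> g) - word [x] \<odot> dfun (word u \<odot> g)"
    by (simp add: word_Cons[of x u] fa_mult_assoc dfun_word_single_mult)
  also have "\<dots> = dgen x \<odot> (word u \<odot> g) - word [x] \<odot> (dfun (word u) \<odot> g)
      - fa_smul ((-1) ^ length u) (word (x # u) \<odot> dfun g)"
    unfolding Cons.IH fa_mult_add_right fa_mult_smul_right word_Cons[of x u] fa_mult_assoc
    by (simp add: diff_diff_eq)
  also have "\<dots> = dfun (word (x # u)) \<odot> g + fa_smul ((-1) ^ length (x # u)) (word (x # u) \<odot> dfun g)"
    by (rule ext)
      (simp add: word_Cons[of x u] dfun_word_single_mult fa_mult_diff_left fa_mult_assoc fa_smul_def)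
  finally show ?case .
qed

lemma fa_expansion:
  fixes f :: "'a::comm_ring_1 fa"
  assumes "finite S" "{w. f w \<noteq> 0} \<subseteq> S"
  shows "f = (\<lambda>w. \<Sum>u\<in>S. f u * word u w)"
proof
  fix w
  have "(\<Sum>u\<in>S. f u * word u w) = (\<Sum>u\<in>S. if w = u then f w else 0)"
    by (rule sum.cong) (auto simp: word_apply)
  also have "\<dots> = f w"
    using assms by (subst sum.delta') auto
  finally show "f w = (\<Sum>u\<in>S. f u * word u w)" by simp
qed

lemma dfun_expansion:
  fixes f :: "'a::comm_ring_1 fa"
  assumes "finite S" "{w. f w \<noteq> 0} \<subseteq> S"
  shows "dfun f = (\<lambda>v. \<Sum>u\<in>S. f u * dfun (word u) v)"
proof
  fix v
  have "dfun f v = dfun (\<lambda>w. \<Sum>u\<in>S. f u * word u w) v"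
    using fa_expansion[OF assms] by metis
  then show "dfun f v = (\<Sum>u\<in>S. f u * dfun (word u) v)"
    by (simp add: dfun_lincomb[OF assms(1)])
qed

lemma dfa_eq_dfun: "f \<in> fa_carrier \<Longrightarrow> dfa f = dfun f"
  by (simp add: dfun_expansion[of "{w. f w \<noteq> 0}"] fa_carrier_def dfa_def dfun_word)

theorem dfun_mult:
  assumes "f \<in> fa_carrier"
  shows "dfun (f \<odot> g) = dfun f \<odot> g + sign_twist f \<odot> dfun g"
proof -
  define S where "S = {w. f w \<noteq> 0}"
  have S: "finite S" "{w. f w \<noteq> 0} \<subseteq> S" "{w. sign_twist f w \<noteq> 0} \<subseteq> S"
    using assms by (auto simp: S_def fa_carrier_def sign_twist_def)
  have fg: "f \<odot> g = (\<lambda>w. \<Sum>u\<in>S. f u * (word u \<odot> g) w)"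
    by (subst fa_expansion[OF S(1,2)]) (rule fa_mult_lincomb_left)
  have "dfun (f \<odot> g) = (\<lambda>v. \<Sum>u\<in>S. f u * dfun (word u \<odot> g) v)"
    unfolding fg by (rule ext) (rule dfun_lincomb[OF S(1)])
  also have "\<dots> = (\<lambda>v. (\<Sum>u\<in>S. f u * (dfun (word u) \<odot> g) v)
      + (\<Sum>u\<in>S. sign_twist f u * (word u \<odot> dfun g) v))"
    by (simp add: dfun_word_mult fa_smul_def sign_twist_def sum.distrib algebra_simps)
  also have "\<dots> = dfun f \<odot> g + sign_twist f \<odot> dfun g"
    by (subst dfun_expansion[OF S(1,2)], subst (2) fa_expansion[OF S(1,3)])
      (simp add: fa_mult_lincomb_left plus_fun_def)
  finally show ?thesis .
qed

lemma finite_words_shorter: "finite {u :: gen list. length u < n}"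
proof -
  have "finite {u. set u \<subseteq> (UNIV :: gen set) \<and> length u \<le> n}"
  proof (rule finite_lists_length_le)
    have UNIV_eq: "(UNIV :: gen set) = {Y1, Y2, Y3}"
      using gen.exhaust by auto
    show "finite (UNIV :: gen set)"
      unfolding UNIV_eq by simp
  qed
  then show ?thesis by (rule finite_subset[rotated]) auto
qed

lemma fa_carrier_iff_length_bounded:
  "f \<in> fa_carrier \<longleftrightarrow> (\<exists>n. \<forall>w. n \<le> length w \<longrightarrow> f w = 0)"
proof
  assume "f \<in> fa_carrier"
  then have "finite (length ` {w. f w \<noteq> 0})" by (simp add: fa_carrier_def)
  then obtain n where "\<forall>k \<in> length ` {w. f w \<noteq> 0}. k < n"
    using finite_nat_set_iff_bounded by blast
  then show "\<exists>n. \<forall>w. n \<le> length w \<longrightarrow> f w = 0" by (metis (mono_tags) image_eqI leD mem_Collect_eq)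
next
  assume "\<exists>n. \<forall>w. n \<le> length w \<longrightarrow> f w = 0"
  then obtain n where "\<forall>w. n \<le> length w \<longrightarrow> f w = 0" ..
  then have "{w. f w \<noteq> 0} \<subseteq> {u. length u < n}"
    by (auto simp: not_le[symmetric])
  then show "f \<in> fa_carrier"
    unfolding fa_carrier_def using finite_words_shorter finite_subset by blast
qed

lemma fa_carrier_zero [simp]: "0 \<in> fa_carrier"
  by (simp add: fa_carrier_def zero_fun_def)

lemma fa_carrier_word [simp]: "word u \<in> fa_carrier"
  by (simp add: fa_carrier_def word_apply)

lemma fa_carrier_add [simp]:
  "f \<in> fa_carrier \<Longrightarrow> g \<in> fa_carrier \<Longrightarrow> f + (g :: 'a::comm_ring_1 fa) \<in> fa_carrier"
  unfolding fa_carrier_def mem_Collect_eq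
  by (rule finite_subset[of _ "{w. f w \<noteq> 0} \<union> {w. g w \<noteq> 0}"]) auto

lemma fa_carrier_smul [simp]: "f \<in> fa_carrier \<Longrightarrow> fa_smul c (f :: 'a::comm_ring_1 fa) \<in> fa_carrier"
  unfolding fa_carrier_def fa_smul_def mem_Collect_eq by (erule finite_subset[rotated]) auto

lemma fa_carrier_uminus [simp]: "f \<in> fa_carrier \<Longrightarrow> - (f :: 'a::comm_ring_1 fa) \<in> fa_carrier"
  by (simp add: fa_carrier_def)

lemma fa_carrier_diff [simp]:
  "f \<in> fa_carrier \<Longrightarrow> g \<in> fa_carrier \<Longrightarrow> f - (g :: 'a::comm_ring_1 fa) \<in> fa_carrier"
  using fa_carrier_add[of f "- g"] by simp

lemma fa_carrier_mult [simp]: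
  assumes "f \<in> fa_carrier" "g \<in> fa_carrier"
  shows "f \<odot> g \<in> fa_carrier"
proof -
  obtain n m where n: "\<forall>w. n \<le> length w \<longrightarrow> f w = 0" and m: "\<forall>w. m \<le> length w \<longrightarrow> g w = 0"
    using assms unfolding fa_carrier_iff_length_bounded by blast
  have "(f \<odot> g) w = 0" if w: "n + m \<le> length w" for w
  proof -
    have "f (take i w) * g (drop i w) = 0" for i
    proof (cases "n \<le> i")
      case True
      then show ?thesis using n w by simp
    next
      case False
      then show ?thesis using m w by simp
    qed
    then show ?thesis by (simp add: fa_mult_def)
  qed
  then show ?thesis
    unfolding fa_carrier_iff_length_bounded by blast
qed

lemma dfun_eq_0_if_long:
  "\<forall>u. n \<le> length u \<longrightarrow> f u = 0 \<Longrightarrow> Suc n \<le> length v \<Longrightarrow> dfun f v = 0"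
proof (induction v arbitrary: f n rule: induct_list012)
  case (3 a b w)
  then have "dfun (\<lambda>u. f (a # u)) (b # w) = 0"
    using "3.IH"(2)[of "n - 1" "\<lambda>u. f (a # u)"] by simp
  with "3.prems" show ?case by (simp split: option.split)
qed simp_all

lemma fa_carrier_dfun [simp]:
  assumes "f \<in> fa_carrier"
  shows "dfun f \<in> fa_carrier"
proof -
  obtain n where "\<forall>u. n \<le> length u \<longrightarrow> f u = 0"
    using assms by (auto simp: fa_carrier_iff_length_bounded)
  then have "\<forall>v. Suc n \<le> length v \<longrightarrow> dfun f v = 0"
    using dfun_eq_0_if_long by blast
  then show ?thesis
    unfolding fa_carrier_iff_length_bounded by blast
qed

definition homogeneous :: "nat \<Rightarrow> 'a::zero fa \<Rightarrow> bool" where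
  "homogeneous n f \<longleftrightarrow> (\<forall>w. f w \<noteq> 0 \<longrightarrow> length w = n)"

lemma homogeneous_in_fa_carrier: "homogeneous n f \<Longrightarrow> f \<in> fa_carrier"
proof -
  assume "homogeneous n f"
  then have "\<forall>w. Suc n \<le> length w \<longrightarrow> f w = 0"
    unfolding homogeneous_def by fastforce
  then show ?thesis
    unfolding fa_carrier_iff_length_bounded by blast
qed

lemma homogeneous_zero: "homogeneous n 0"
  by (simp add: homogeneous_def)

lemma homogeneous_word: "homogeneous (length u) (word u)"
  by (simp add: homogeneous_def word_apply)

lemma homogeneous_add:
  "homogeneous n f \<Longrightarrow> homogeneous n g \<Longrightarrow> homogeneous n (f + g :: 'a::comm_ring_1 fa)"
  unfolding homogeneous_def by (metis add.right_neutral plus_fun_apply)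

lemma homogeneous_mult:
  assumes f: "homogeneous n f" and g: "homogeneous m g"
  shows "homogeneous (n + m) (f \<odot> g)"
  unfolding homogeneous_def
proof (intro allI impI)
  fix w :: "gen list"
  assume "(f \<odot> g) w \<noteq> 0"
  then obtain i where "f (take i w) * g (drop i w) \<noteq> 0"
    unfolding fa_mult_def by (meson sum.not_neutral_contains_not_neutral)
  then have "f (take i w) \<noteq> 0" "g (drop i w) \<noteq> 0"
    by auto
  then have "length (take i w) = n" "length (drop i w) = m"
    using f g unfolding homogeneous_def by blast+
  then show "length w = n + m" by simp
qed

lemma sign_twist_homogeneous: "homogeneous n f \<Longrightarrow> sign_twist f = fa_smul ((-1) ^ n) f"
proof
  fix w
  assume "homogeneous n f"
  then show "sign_twist f w = fa_smul ((-1) ^ n) f w"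
    unfolding homogeneous_def sign_twist_def fa_smul_def by (cases "f w = 0") auto
qed

lemma dfun_mult_homogeneous:
  "homogeneous n f \<Longrightarrow> dfun (f \<odot> g) = dfun f \<odot> g + fa_smul ((-1) ^ n) (f \<odot> dfun g)"
  by (simp add: dfun_mult homogeneous_in_fa_carrier sign_twist_homogeneous fa_mult_smul_left)

lemma homogeneous_y: "homogeneous 1 y1" "homogeneous 1 y2" "homogeneous 1 y3"
  using homogeneous_word[of "[_]"] by (simp_all add: y_eq_word)

lemma fa_carrier_y [simp]: "y1 \<in> fa_carrier" "y2 \<in> fa_carrier" "y3 \<in> fa_carrier"
  by (simp_all add: y_eq_word)

lemma dfun_y1: "dfun y1 = y3 \<odot> y3"
  by (simp add: y1_def dfun_word fa_diff_eq_minus fa_zero_eq_zero)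

lemma dfun_y3 [simp]: "dfun y3 = 0"
  by (simp add: y3_def dfun_word fa_diff_eq_minus fa_zero_eq_zero)

lemma homogeneous_dgen: "homogeneous 2 (dgen x)"
proof (cases x)
  case Y1
  then show ?thesis
    using homogeneous_mult[OF homogeneous_y(3) homogeneous_y(3)] by (simp add: numeral_2_eq_2)
next
  case Y2
  then show ?thesis
    using homogeneous_add[OF homogeneous_mult[OF homogeneous_y(1) homogeneous_y(3)]
        homogeneous_mult[OF homogeneous_y(3) homogeneous_y(1)]]
    by (simp add: fa_add_eq_plus numeral_2_eq_2)
next
  case Y3
  then show ?thesis by (simp add: fa_zero_eq_zero homogeneous_zero)
qed

lemma dfun_dgen: "dfun (dgen x) = 0"
proof (cases x)
  case Y1
  then show ?thesis by (simp add: dfun_mult_homogeneous[OF homogeneous_y(3)])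
next
  case Y2
  then show ?thesis
    by (simp add: dfun_mult_homogeneous[OF homogeneous_y(1)] dfun_mult_homogeneous[OF homogeneous_y(3)]
        fa_add_eq_plus dfun_add dfun_y1 fa_smul_minus_one fa_mult_uminus_right fa_mult_assoc)
next
  case Y3
  then show ?thesis by (simp add: fa_zero_eq_zero)
qed

lemma dfun_dfun_word: "dfun (dfun (word u :: 'a::comm_ring_1 fa)) = 0"
proof (induction u)
  case Nil
  then show ?case by simp
next
  case (Cons x u)
  have "dfun (dfun (word (x # u) :: 'a fa)) = dfun (dgen x \<odot> word u) - dfun (word [x] \<odot> dfun (word u))"
    by (simp only: word_Cons[of x u] dfun_word_single_mult dfun_diff)
  also have "\<dots> = 0"
    unfolding dfun_mult_homogeneous[OF homogeneous_dgen] dfun_word_single_mult dfun_dgen Cons.IH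
    by (simp add: fa_smul_def)
  finally show ?case .
qed

theorem dfun_dfun:
  assumes "f \<in> fa_carrier"
  shows "dfun (dfun f) = 0"
proof
  fix v
  have S: "finite {w. f w \<noteq> 0}"
    using assms by (simp add: fa_carrier_def)
  show "dfun (dfun f) v = 0 v"
    by (simp add: dfun_expansion[OF S subset_refl] dfun_lincomb[OF S] dfun_dfun_word)
qed

section \<open>Cocycles and coboundaries\<close>

lemma cocycles_iff: "c \<in> cocycles \<longleftrightarrow> c \<in> fa_carrier \<and> dfun c = 0"
  by (auto simp: cocycles_def dfa_eq_dfun fa_zero_eq_zero)

lemma coboundaries_iff: "x \<in> coboundaries \<longleftrightarrow> (\<exists>g \<in> fa_carrier. x = dfun g)"
proof
  assume "x \<in> coboundaries"
  then obtain g where "g \<in> fa_carrier" "x = dfa g"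
    unfolding coboundaries_def by blast
  then show "\<exists>g \<in> fa_carrier. x = dfun g"
    by (auto simp: dfa_eq_dfun)
next
  assume "\<exists>g \<in> fa_carrier. x = dfun g"
  then obtain g where "g \<in> fa_carrier" "x = dfun g" ..
  then have "x = dfa g" "g \<in> fa_carrier"
    by (simp_all add: dfa_eq_dfun)
  then show "x \<in> coboundaries"
    unfolding coboundaries_def by blast
qed

lemma dfun_in_coboundaries: "g \<in> fa_carrier \<Longrightarrow> dfun g \<in> coboundaries"
  unfolding coboundaries_iff by blast

lemma cocycles_add: "z \<in> cocycles \<Longrightarrow> z' \<in> cocycles \<Longrightarrow> z + z' \<in> cocycles"
  by (simp add: cocycles_iff dfun_add)

lemma cocycles_smul: "z \<in> cocycles \<Longrightarrow> fa_smul c z \<in> cocycles"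
  by (simp add: cocycles_iff dfun_smul)

lemma cocycles_mult: "z \<in> cocycles \<Longrightarrow> z' \<in> cocycles \<Longrightarrow> z \<odot> z' \<in> cocycles"
  by (simp add: cocycles_iff dfun_mult)

lemma word_Nil_in_cocycles: "word [] \<in> cocycles"
  by (simp add: cocycles_iff)

lemma coboundaries_zero [simp]: "0 \<in> coboundaries"
  using dfun_in_coboundaries[OF fa_carrier_zero] by simp

lemma coboundaries_add: "x \<in> coboundaries \<Longrightarrow> x' \<in> coboundaries \<Longrightarrow> x + x' \<in> coboundaries"
  unfolding coboundaries_iff by (metis dfun_add fa_carrier_add)

lemma coboundaries_diff: "x \<in> coboundaries \<Longrightarrow> x' \<in> coboundaries \<Longrightarrow> x - x' \<in> coboundaries"
  unfolding coboundaries_iff by (metis dfun_diff fa_carrier_diff)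

lemma coboundaries_smul: "x \<in> coboundaries \<Longrightarrow> fa_smul c x \<in> coboundaries"
  unfolding coboundaries_iff by (metis dfun_smul fa_carrier_smul)

lemma coboundaries_uminus: "x \<in> coboundaries \<Longrightarrow> - x \<in> coboundaries"
  unfolding coboundaries_iff by (metis dfun_uminus fa_carrier_uminus)

lemma coboundaries_mult_cocycle:
  assumes "x \<in> coboundaries" "z \<in> cocycles"
  shows "x \<odot> z \<in> coboundaries"
proof -
  obtain g where g: "g \<in> fa_carrier" "x = dfun g"
    using assms(1) unfolding coboundaries_iff by blast
  then have "x \<odot> z = dfun (g \<odot> z)"
    using assms(2) by (simp add: dfun_mult cocycles_iff)
  then show ?thesis
    using g assms(2) by (simp add: dfun_in_coboundaries cocycles_iff)
qed

lemma cocycle_mult_coboundaries: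
  assumes "x \<in> coboundaries" "z \<in> cocycles" "homogeneous n z"
  shows "z \<odot> x \<in> coboundaries"
proof -
  obtain g where g: "g \<in> fa_carrier" "x = dfun g"
    using assms(1) unfolding coboundaries_iff by blast
  have "dfun (fa_smul ((-1) ^ n) (z \<odot> g)) = fa_smul ((-1) ^ n * (-1) ^ n) (z \<odot> x)"
    using assms(2) g by (simp add: dfun_smul dfun_mult_homogeneous[OF assms(3)] cocycles_iff fa_smul_smul)
  also have "\<dots> = z \<odot> x"
    by (simp add: power_mult_distrib[symmetric] fa_smul_def)
  finally show ?thesis
    using g assms(2) dfun_in_coboundaries by (metis cocycles_iff fa_carrier_mult fa_carrier_smul)
qed

section \<open>The representatives of the polynomial generators\<close>

lemma zz_eq: "zz = y1 \<odot> y1 + y2 \<odot> y3 + y3 \<odot> y2"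
  by (simp add: zz_def fa_add_eq_plus)

lemma homogeneous_zz: "homogeneous 2 zz"
  using homogeneous_add[OF homogeneous_add[OF homogeneous_mult[OF homogeneous_y(1) homogeneous_y(1)]
        homogeneous_mult[OF homogeneous_y(2) homogeneous_y(3)]] homogeneous_mult[OF homogeneous_y(3) homogeneous_y(2)]]
  by (simp add: zz_eq numeral_2_eq_2)

lemma zz_in_cocycles: "zz \<in> cocycles"
  unfolding cocycles_iff zz_eq
  by (simp add: dfun_add dfun_word y_eq_word word_mult_word fa_diff_eq_minus fa_zero_eq_zero
      fa_add_eq_plus fa_mult_add_left fa_mult_add_right fa_mult_diff_left fa_mult_diff_right)

lemma y3_in_cocycles: "y3 \<in> cocycles"
  by (simp add: cocycles_iff)

lemma zz_y3_commutator: "zz \<odot> y3 - y3 \<odot> zz = dfun (- (y1 \<odot> y2 + y2 \<odot> y1))"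
  unfolding zz_eq
  by (simp add: dfun_add dfun_uminus dfun_diff dfun_word y_eq_word word_mult_word fa_diff_eq_minus
      fa_zero_eq_zero fa_add_eq_plus fa_mult_add_left fa_mult_add_right fa_mult_diff_left
      fa_mult_diff_right)

lemma fa_pow_0 [simp]: "fa_pow f 0 = word []"
  by (simp add: fa_pow_def fa_one_def)

lemma fa_pow_Suc: "fa_pow f (Suc n) = f \<odot> fa_pow f n"
  by (simp add: fa_pow_def)

lemma fa_pow_add: "fa_pow f (m + n) = fa_pow f m \<odot> fa_pow f n"
  by (induction m) (simp_all add: fa_pow_Suc fa_mult_assoc)

lemma homogeneous_fa_pow: "homogeneous k f \<Longrightarrow> homogeneous (k * n) (fa_pow f n)"
proof (induction n)
  case 0
  then show ?case using homogeneous_word[of "[]"] by simp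
next
  case (Suc n)
  then show ?case using homogeneous_mult[of k f "k * n" "fa_pow f n"] by (simp add: fa_pow_Suc)
qed

lemma fa_pow_in_cocycles: "z \<in> cocycles \<Longrightarrow> fa_pow z n \<in> cocycles"
  by (induction n) (simp_all add: fa_pow_Suc word_Nil_in_cocycles cocycles_mult)

lemma fa_pow_commute_mod_coboundaries:
  assumes x: "homogeneous k x" "x \<in> cocycles" and y: "homogeneous l y" "y \<in> cocycles"
    and commute: "x \<odot> y - y \<odot> x \<in> coboundaries"
  shows "fa_pow x m \<odot> fa_pow y n - fa_pow y n \<odot> fa_pow x m \<in> coboundaries"
proof -
  have x_pow_y: "x \<odot> fa_pow y n - fa_pow y n \<odot> x \<in> coboundaries"
  proof (induction n)
    case 0
    show "x \<odot> fa_pow y 0 - fa_pow y 0 \<odot> x \<in> coboundaries"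
      by simp
  next
    case (Suc n)
    have "x \<odot> fa_pow y (Suc n) - fa_pow y (Suc n) \<odot> x
        = (x \<odot> y - y \<odot> x) \<odot> fa_pow y n + y \<odot> (x \<odot> fa_pow y n - fa_pow y n \<odot> x)"
      by (simp add: fa_pow_Suc fa_mult_diff_left fa_mult_diff_right fa_mult_assoc)
    also have "\<dots> \<in> coboundaries"
      by (rule coboundaries_add[OF coboundaries_mult_cocycle[OF commute fa_pow_in_cocycles[OF y(2)]]
            cocycle_mult_coboundaries[OF Suc.IH y(2,1)]])
    finally show ?case .
  qed
  show ?thesis
  proof (induction m)
    case 0
    show "fa_pow x 0 \<odot> fa_pow y n - fa_pow y n \<odot> fa_pow x 0 \<in> coboundaries"
      by simp
  next
    case (Suc m)
    have "fa_pow x (Suc m) \<odot> fa_pow y n - fa_pow y n \<odot> fa_pow x (Suc m)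
        = x \<odot> (fa_pow x m \<odot> fa_pow y n - fa_pow y n \<odot> fa_pow x m)
          + (x \<odot> fa_pow y n - fa_pow y n \<odot> x) \<odot> fa_pow x m"
      by (simp add: fa_pow_Suc fa_mult_diff_left fa_mult_diff_right fa_mult_assoc)
    also have "\<dots> \<in> coboundaries"
      by (rule coboundaries_add[OF cocycle_mult_coboundaries[OF Suc.IH x(2,1)]
            coboundaries_mult_cocycle[OF x_pow_y fa_pow_in_cocycles[OF x(2)]]])
    finally show ?case .
  qed
qed

definition yz :: "nat \<Rightarrow> nat \<Rightarrow> 'a::comm_ring_1 fa" where
  "yz i j = fa_pow y3 i \<odot> fa_pow zz j"

lemma yz_in_cocycles: "yz i j \<in> cocycles"
  by (simp add: yz_def cocycles_mult fa_pow_in_cocycles y3_in_cocycles zz_in_cocycles)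

lemma yz_mult_mod_coboundaries: "yz (i + k) (j + l) - yz i j \<odot> yz k l \<in> coboundaries"
proof -
  have "zz \<odot> y3 - y3 \<odot> zz \<in> coboundaries"
    unfolding zz_y3_commutator by (rule dfun_in_coboundaries) simp
  then have "fa_pow zz j \<odot> fa_pow y3 k - fa_pow y3 k \<odot> fa_pow zz j \<in> coboundaries"
    by (rule fa_pow_commute_mod_coboundaries[OF homogeneous_zz zz_in_cocycles
          homogeneous_y(3) y3_in_cocycles])
  then have "fa_pow y3 i \<odot> (- (fa_pow zz j \<odot> fa_pow y3 k - fa_pow y3 k \<odot> fa_pow zz j) \<odot> fa_pow zz l)
      \<in> coboundaries"
    by (rule cocycle_mult_coboundaries[OF coboundaries_mult_cocycle[OF coboundaries_uminus]
          fa_pow_in_cocycles[OF y3_in_cocycles] homogeneous_fa_pow[OF homogeneous_y(3)]])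
      (rule fa_pow_in_cocycles[OF zz_in_cocycles])
  also have "fa_pow y3 i \<odot> (- (fa_pow zz j \<odot> fa_pow y3 k - fa_pow y3 k \<odot> fa_pow zz j) \<odot> fa_pow zz l)
      = yz (i + k) (j + l) - yz i j \<odot> yz k l"
    by (simp add: yz_def fa_pow_add fa_mult_diff_left fa_mult_diff_right fa_mult_assoc
        fa_mult_uminus_left fa_mult_uminus_right)
  finally show ?thesis .
qed

lemma ev_eq_sum_upto:
  assumes "degree P \<le> N" "\<And>j. degree (coeff P j) \<le> N"
  shows "ev P = (\<lambda>v. \<Sum>j\<le>N. \<Sum>i\<le>N. coeff (coeff P j) i * yz i j v)"
proof
  fix v
  have inner: "(\<Sum>i\<le>degree (coeff P j). coeff (coeff P j) i * yz i j v)
      = (\<Sum>i\<le>N. coeff (coeff P j) i * yz i j v)" for j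
    using assms(2)[of j] by (intro sum.mono_neutral_left) (auto simp: coeff_eq_0)
  have "ev P v = (\<Sum>j\<le>degree P. \<Sum>i\<le>N. coeff (coeff P j) i * yz i j v)"
    unfolding ev_def yz_def[symmetric] inner ..
  also have "\<dots> = (\<Sum>j\<le>N. \<Sum>i\<le>N. coeff (coeff P j) i * yz i j v)"
    using assms(1) by (intro sum.mono_neutral_left) (auto simp: coeff_eq_0)
  finally show "ev P v = (\<Sum>j\<le>N. \<Sum>i\<le>N. coeff (coeff P j) i * yz i j v)" .
qed

lemma degree_coeff_bounded: "\<exists>N. degree P \<le> N \<and> (\<forall>j. degree (coeff P j) \<le> N)"
proof (intro exI conjI allI)
  let ?M = "\<Sum>k\<le>degree P. degree (coeff P k)"
  show "degree P \<le> degree P + ?M" by simp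
  fix j
  have "degree (coeff P j) \<le> ?M"
    by (cases "j \<le> degree P") (auto intro: member_le_sum simp: coeff_eq_0)
  then show "degree (coeff P j) \<le> degree P + ?M" by simp
qed

lemma ev_add: "ev (P + Q) = ev P + ev Q"
proof -
  obtain M N where M: "degree P \<le> M" "\<And>j. degree (coeff P j) \<le> M"
    and N: "degree Q \<le> N" "\<And>j. degree (coeff Q j) \<le> N"
    using degree_coeff_bounded by metis
  have P: "degree P \<le> M + N" "\<And>j. degree (coeff P j) \<le> M + N"
    using M by (auto intro: trans_le_add1)
  have Q: "degree Q \<le> M + N" "\<And>j. degree (coeff Q j) \<le> M + N"
    using N by (auto intro: trans_le_add2)
  have PQ: "degree (P + Q) \<le> M + N" "\<And>j. degree (coeff (P + Q) j) \<le> M + N"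
    using P Q by (auto intro: degree_add_le)
  show ?thesis
    unfolding ev_eq_sum_upto[OF PQ] ev_eq_sum_upto[OF P] ev_eq_sum_upto[OF Q]
    by (simp add: fun_eq_iff sum.distrib algebra_simps)
qed

lemma ev_zero [simp]: "ev 0 = 0"
  by (simp add: ev_def zero_fun_def)

lemma ev_monom: "ev (monom (monom c i) j) = fa_smul c (yz i j)"
proof
  fix v
  let ?N = "i + j"
  have "degree (monom (monom c i) j) \<le> ?N" "degree (coeff (monom (monom c i) j) j') \<le> ?N" for j'
    using degree_monom_le[of "monom c i" j] degree_monom_le[of c i] by (auto simp: coeff_monom)
  then have "ev (monom (monom c i) j) v
      = (\<Sum>j'\<le>?N. \<Sum>i'\<le>?N. coeff (coeff (monom (monom c i) j) j') i' * yz i' j' v)"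
    by (simp add: ev_eq_sum_upto)
  also have "\<dots> = (\<Sum>j'\<le>?N. \<Sum>i'\<le>?N. if i = i' then if j = j' then c * yz i j v else 0 else 0)"
    by (intro sum.cong refl) (auto simp: coeff_monom)
  also have "\<dots> = fa_smul c (yz i j) v"
    by (simp add: fa_smul_def sum.delta' cong: if_cong)
  finally show "ev (monom (monom c i) j) v = fa_smul c (yz i j) v" .
qed

lemma poly_poly_induct [case_names zero add monom]:
  assumes zero: "\<Phi> 0"
    and add: "\<And>P Q. \<Phi> P \<Longrightarrow> \<Phi> Q \<Longrightarrow> \<Phi> (P + Q)"
    and monom: "\<And>c i j. \<Phi> (monom (monom c i) j)"
  shows "\<Phi> P"
proof -
  have sum: "(\<And>x. x \<in> S \<Longrightarrow> \<Phi> (F x)) \<Longrightarrow> \<Phi> (\<Sum>x\<in>S. F x)" if "finite S" for S :: "nat set" and F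
    using that by (induction S rule: finite_induct) (auto intro: zero add)
  have "P = (\<Sum>j\<le>degree P. monom (coeff P j) j)"
    by (simp add: poly_as_sum_of_monoms)
  also have "\<dots> = (\<Sum>j\<le>degree P. \<Sum>i\<le>degree (coeff P j). monom (monom (coeff (coeff P j) i) i) j)"
    by (simp add: monom_sum[symmetric] poly_as_sum_of_monoms)
  finally show ?thesis
    by (metis (no_types, lifting) finite_atMost monom sum)
qed

lemma ev_in_cocycles: "ev P \<in> cocycles"
proof (induction P rule: poly_poly_induct)
  case zero
  show "ev 0 \<in> cocycles"
    by (simp add: cocycles_iff)
next
  case (add P Q)
  then show "ev (P + Q) \<in> cocycles"
    by (simp add: ev_add cocycles_add)
next
  case (monom c i j)
  show "ev (monom (monom c i) j) \<in> cocycles"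
    by (simp add: ev_monom cocycles_smul yz_in_cocycles)
qed

lemma ev_mult_mod_coboundaries: "ev (P * Q) - ev P \<odot> ev Q \<in> coboundaries"
proof (induction P rule: poly_poly_induct)
  case zero
  show "ev (0 * Q) - ev 0 \<odot> ev Q \<in> coboundaries"
    by simp
next
  case (add P1 P2)
  have "ev ((P1 + P2) * Q) - ev (P1 + P2) \<odot> ev Q
      = (ev (P1 * Q) - ev P1 \<odot> ev Q) + (ev (P2 * Q) - ev P2 \<odot> ev Q)"
    by (simp add: distrib_right ev_add fa_mult_add_left)
  also have "\<dots> \<in> coboundaries"
    by (rule coboundaries_add[OF add.IH])
  finally show "ev ((P1 + P2) * Q) - ev (P1 + P2) \<odot> ev Q \<in> coboundaries" .
next
  case (monom c i j)
  let ?M = "monom (monom c i) j"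
  show "ev (?M * Q) - ev ?M \<odot> ev Q \<in> coboundaries"
  proof (induction Q rule: poly_poly_induct)
    case zero
    show "ev (?M * 0) - ev ?M \<odot> ev 0 \<in> coboundaries"
      by simp
  next
    case (add Q1 Q2)
    have "ev (?M * (Q1 + Q2)) - ev ?M \<odot> ev (Q1 + Q2)
        = (ev (?M * Q1) - ev ?M \<odot> ev Q1) + (ev (?M * Q2) - ev ?M \<odot> ev Q2)"
      by (simp add: distrib_left ev_add fa_mult_add_right)
    also have "\<dots> \<in> coboundaries"
      by (rule coboundaries_add[OF add.IH])
    finally show "ev (?M * (Q1 + Q2)) - ev ?M \<odot> ev (Q1 + Q2) \<in> coboundaries" .
  next
    case (monom d k l)
    have "ev (?M * monom (monom d k) l) - ev ?M \<odot> ev (monom (monom d k) l)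
        = fa_smul (c * d) (yz (i + k) (j + l) - yz i j \<odot> yz k l)"
      by (simp add: mult_monom ev_monom fa_mult_smul_left fa_mult_smul_right fa_smul_smul
          fa_smul_diff mult.commute)
    then show "ev (?M * monom (monom d k) l) - ev ?M \<odot> ev (monom (monom d k) l) \<in> coboundaries"
      by (simp add: coboundaries_smul yz_mult_mod_coboundaries)
  qed
qed

section \<open>Every cocycle is cohomologous to a representative\<close>

text \<open>On basis words, \<open>homotopy\<close> sends \<open>y3 y3 r\<close> to \<open>y1 r\<close> and \<open>y3 y1 r\<close> to \<open>y2 r\<close> and kills all
  other words; on coefficient functions this reads the value at \<open>y1 r\<close> off \<open>y3 y3 r\<close>.\<close>

definition homotopy :: "'a::comm_ring_1 fa \<Rightarrow> 'a fa" where
  "homotopy f = (\<lambda>v. case v of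
     Y1 # r \<Rightarrow> f (Y3 # Y3 # r) | Y2 # r \<Rightarrow> f (Y3 # Y1 # r) | _ \<Rightarrow> 0)"

definition zz_cofactor :: "'a::comm_ring_1 fa \<Rightarrow> 'a fa" where
  "zz_cofactor f = (\<lambda>r. f (Y3 # Y2 # r))"

definition normal_part :: "'a::comm_ring_1 fa \<Rightarrow> 'a fa" where
  "normal_part f = fa_smul (f []) (word []) + fa_smul (f [Y3]) y3 + zz \<odot> zz_cofactor f"

lemma zz_mult_Nil [simp]: "(zz \<odot> g) [] = 0"
  by (simp add: zz_eq fa_mult_add_left fa_mult_assoc y_eq_word)

lemma zz_mult_single [simp]: "(zz \<odot> g) [a] = 0"
  by (simp add: zz_eq fa_mult_add_left fa_mult_assoc y_eq_word)

lemma zz_mult_Cons_Cons [simp]: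
  "(zz \<odot> g) (a # b # w) =
     (if (a = Y1 \<and> b = Y1) \<or> (a = Y2 \<and> b = Y3) \<or> (a = Y3 \<and> b = Y2) then g w else 0)"
  by (cases a; cases b) (simp_all add: zz_eq fa_mult_add_left fa_mult_assoc y_eq_word)

lemma zz_mult_eq_0D: "zz \<odot> g = 0 \<Longrightarrow> g = 0"
proof
  fix w
  assume "zz \<odot> g = 0"
  then have "(zz \<odot> g) (Y3 # Y2 # w) = 0" by simp
  then show "g w = 0 w" by simp
qed

lemma homotopy_formula: "dfun (homotopy f) + homotopy (dfun f) = f - normal_part f"
proof
  fix v
  show "(dfun (homotopy f) + homotopy (dfun f)) v = (f - normal_part f) v"
  proof (induction v rule: induct_list012)
    case 1
    then show ?case by (simp add: homotopy_def normal_part_def fa_smul_def word_apply y_eq_word)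
  next
    case (2 a)
    then show ?case
      by (cases a) (simp_all add: homotopy_def normal_part_def fa_smul_def word_apply y_eq_word)
  next
    case (3 a b w)
    then show ?case
      by (cases a; cases b)
        (simp_all add: homotopy_def normal_part_def zz_cofactor_def fa_smul_def word_apply y_eq_word)
  qed
qed

lemma homotopy_zero [simp]: "homotopy 0 = 0"
  by (rule ext) (simp add: homotopy_def split: list.split gen.split)

lemma fa_carrier_homotopy:
  assumes "f \<in> fa_carrier"
  shows "homotopy f \<in> fa_carrier"
proof -
  obtain n where n: "\<forall>w. n \<le> length w \<longrightarrow> f w = 0"
    using assms unfolding fa_carrier_iff_length_bounded ..
  then have "\<forall>v. n \<le> length v \<longrightarrow> homotopy f v = 0"
    by (auto simp: homotopy_def split: list.split gen.split)
  then show ?thesis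
    unfolding fa_carrier_iff_length_bounded ..
qed

lemma cocycle_eq_normal_part:
  assumes "c \<in> cocycles"
  shows "c = normal_part c + dfun (homotopy c)"
  using homotopy_formula[of c] assms by (simp add: cocycles_iff algebra_simps)

lemma zz_cofactor_in_cocycles:
  assumes "c \<in> cocycles"
  shows "zz_cofactor c \<in> cocycles"
proof -
  have c: "c \<in> fa_carrier" "dfun c = 0"
    using assms by (simp_all add: cocycles_iff)
  obtain n where "\<forall>w. n \<le> length w \<longrightarrow> c w = 0"
    using c(1) unfolding fa_carrier_iff_length_bounded ..
  then have "\<forall>w. n \<le> length w \<longrightarrow> zz_cofactor c w = 0"
    by (simp add: zz_cofactor_def)
  then have "zz_cofactor c \<in> fa_carrier"
    unfolding fa_carrier_iff_length_bounded ..
  moreover have "dfun (normal_part c) = 0"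
    using arg_cong[OF cocycle_eq_normal_part[OF assms], of dfun] c
    by (simp add: dfun_add dfun_dfun fa_carrier_homotopy)
  then have "zz \<odot> dfun (zz_cofactor c) = 0"
    by (simp add: normal_part_def dfun_add dfun_smul dfun_mult_homogeneous[OF homogeneous_zz]
        zz_in_cocycles[unfolded cocycles_iff])
  ultimately show ?thesis
    by (simp add: cocycles_iff zz_mult_eq_0D)
qed

lemma cohomologous_to_ev_by_zz_cofactor:
  assumes c: "c \<in> cocycles" and Q: "zz_cofactor c - ev Q \<in> coboundaries"
  shows "c - ev (monom (monom (c []) 0) 0 + monom (monom (c [Y3]) 1) 0 + monom (monom 1 0) 1 * Q)
    \<in> coboundaries"
    (is "c - ev (_ + ?b * Q) \<in> _")
proof -
  have ev_b: "ev ?b = zz"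
    using ev_monom[of 1 0 1] by (simp add: yz_def fa_pow_Suc)
  have "c - ev (monom (monom (c []) 0) 0 + monom (monom (c [Y3]) 1) 0 + ?b * Q)
      = zz \<odot> (zz_cofactor c - ev Q) - (ev (?b * Q) - ev ?b \<odot> ev Q) + dfun (homotopy c)"
    unfolding ev_b
    by (subst cocycle_eq_normal_part[OF c])
      (simp add: ev_add ev_monom yz_def fa_pow_Suc normal_part_def fa_mult_diff_right)
  also have "\<dots> \<in> coboundaries"
    using c
    by (intro coboundaries_add coboundaries_diff cocycle_mult_coboundaries[OF Q zz_in_cocycles homogeneous_zz]
        ev_mult_mod_coboundaries dfun_in_coboundaries fa_carrier_homotopy) (simp add: cocycles_iff)
  finally show ?thesis .
qed

theorem cocycle_cohomologous_to_ev:
  assumes "c \<in> cocycles"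
  shows "\<exists>P. c - ev P \<in> coboundaries"
proof -
  obtain n where "\<forall>w. n \<le> length w \<longrightarrow> c w = 0"
    using assms unfolding cocycles_iff fa_carrier_iff_length_bounded by blast
  then show ?thesis
    using assms
  proof (induction n arbitrary: c rule: less_induct)
    case (less n)
    show ?case
    proof (cases "n = 0")
      case True
      then have "c = 0"
        using less.prems(1) by (simp add: fun_eq_iff)
      then have "c - ev 0 \<in> coboundaries"
        by simp
      then show ?thesis ..
    next
      case False
      have "\<forall>w. n - 2 \<le> length w \<longrightarrow> zz_cofactor c w = 0"
        using less.prems(1) by (simp add: zz_cofactor_def)
      then have "\<exists>Q. zz_cofactor c - ev Q \<in> coboundaries"
        using less.IH[of "n - 2" "zz_cofactor c"] False zz_cofactor_in_cocycles[OF less.prems(2)]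
        by (simp add: fun_diff_def)
      then show ?thesis
        using cohomologous_to_ev_by_zz_cofactor[OF less.prems(2)] by blast
    qed
  qed
qed

section \<open>Representatives of nonzero classes are not coboundaries\<close>

definition y3_between :: "nat \<Rightarrow> nat \<Rightarrow> gen list" where
  "y3_between p q = replicate p Y1 @ Y3 # replicate q Y1"

lemma dfun_at_replicate_Y1: "dfun g (replicate n Y1) = 0"
proof (induction n arbitrary: g)
  case (Suc n)
  then show ?case by (cases n) simp_all
qed simp

lemma dfun_at_y3_between:
  "dfun g (y3_between p q) =
     (if 1 \<le> p then (-1) ^ (p - 1) * g (replicate (p - 1) Y1 @ Y2 # replicate q Y1) else 0)
   + (if 1 \<le> q then (-1) ^ p * g (replicate p Y1 @ Y2 # replicate (q - 1) Y1) else 0)"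
  unfolding y3_between_def
proof (induction p arbitrary: g)
  case 0
  show ?case
  proof (cases q)
    case (Suc q')
    have "dfun (\<lambda>u. g (Y3 # u)) (replicate (Suc q') Y1) = 0"
      by (rule dfun_at_replicate_Y1)
    then show ?thesis by (simp add: Suc)
  qed simp
next
  case (Suc p)
  show ?case
  proof (cases p)
    case 0
    then show ?thesis using Suc.IH[of "\<lambda>u. g (Y1 # u)"] by simp
  next
    case (Suc p')
    then show ?thesis
      using Suc.IH[of "\<lambda>u. g (Y1 # u)"] by (simp add: replicate_app_Cons_same)
  qed
qed

definition y3_dual :: "nat \<Rightarrow> 'a::comm_ring_1 fa \<Rightarrow> 'a" where
  "y3_dual n f = (\<Sum>p\<le>n. (-1) ^ p * f (y3_between p (n - p)))"

lemma y3_dual_dfun: "y3_dual n (dfun g) = 0"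
proof (cases n)
  case 0
  then show ?thesis by (simp add: y3_dual_def y3_between_def)
next
  case (Suc m)
  \<comment> \<open>Contracting \<open>y3\<close> with its left or with its right neighbour \<open>y1\<close> gives words \<open>G k\<close>
    that occur twice with opposite signs, so the sum telescopes.\<close>
  define G where "G k = g (replicate k Y1 @ Y2 # replicate (m - k) Y1)" for k
  have "(-1) ^ p * dfun g (y3_between p (n - p))
      = (if p < n then G p else 0) - (if 1 \<le> p then G (p - 1) else 0)" if "p \<le> n" for p
  proof -
    have sign: "(-1) ^ p * ((-1) ^ (p - 1) * x) = - (x :: 'a)" if "1 \<le> p" for x
      using that by (cases p) simp_all
    have "(-1) ^ p * ((-1) ^ p * x) = (x :: 'a)" for x
      by (simp add: mult.assoc[symmetric] power_mult_distrib[symmetric])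
    with sign show ?thesis
      using \<open>p \<le> n\<close> by (auto simp: dfun_at_y3_between G_def Suc Suc_diff_le distrib_left)
  qed
  then have "y3_dual n (dfun g)
      = (\<Sum>p\<le>Suc m. if p < Suc m then G p else 0) - (\<Sum>p\<le>Suc m. if 1 \<le> p then G (p - 1) else 0)"
    unfolding y3_dual_def sum_subtractf[symmetric] by (intro sum.cong) (simp_all add: Suc)
  also have "\<dots> = 0"
  proof -
    have "(\<Sum>p\<le>Suc m. if p < Suc m then G p else 0) = (\<Sum>p\<le>m. G p)"
      by (simp add: sum.atMost_Suc)
    moreover have "(\<Sum>p\<le>Suc m. if 1 \<le> p then G (p - 1) else 0) = (\<Sum>p\<le>m. G p)"
      by (subst sum.atMost_Suc_shift) simp
    ultimately show ?thesis by simp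
  qed
  finally show ?thesis .
qed

lemma fa_pow_zz_at_replicate_Y1: "fa_pow zz k (replicate (2 * j) Y1) = (if k = j then 1 else 0)"
proof (induction k arbitrary: j)
  case 0
  then show ?case by (simp add: word_apply)
next
  case (Suc k)
  then show ?case
    by (cases j) (simp_all add: fa_pow_Suc)
qed

lemma fa_pow_zz_eq_0_if_no_Y2:
  "Y2 \<notin> set v \<Longrightarrow> Y3 \<in> set v \<Longrightarrow> fa_pow zz k v = 0"
proof (induction v arbitrary: k rule: induct_list012)
  case 1
  then show ?case by simp
next
  case (2 a)
  then show ?case by (cases k) (simp_all add: fa_pow_Suc word_apply)
next
  case (3 a b w)
  then show ?case
    by (cases k; cases a; cases b) (simp_all add: fa_pow_Suc word_apply)
qed

lemma y3_mult_at_replicate_Y1: "(y3 \<odot> g) (replicate n Y1) = 0"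
  by (cases n) (simp_all add: y_eq_word)

lemma y3_mult_at_y3_between: "(y3 \<odot> g) (y3_between p q) = (if p = 0 then g (replicate q Y1) else 0)"
  by (cases p) (simp_all add: y_eq_word y3_between_def)

lemma yz_at_replicate_Y1: "yz i k (replicate (2 * j) Y1) = (if i = 0 \<and> k = j then 1 else 0)"
  by (cases i) (simp_all add: yz_def fa_pow_Suc fa_mult_assoc fa_pow_zz_at_replicate_Y1
      y3_mult_at_replicate_Y1)

lemma yz_at_y3_between:
  "yz i k (y3_between p q) = (if p = 0 \<and> i = 1 then fa_pow zz k (replicate q Y1) else 0)"
proof (cases i)
  case 0
  then show ?thesis by (simp add: yz_def y3_between_def fa_pow_zz_eq_0_if_no_Y2)
next
  case (Suc i')
  then show ?thesis
    by (cases i') (simp_all add: yz_def fa_pow_Suc fa_mult_assoc y3_mult_at_y3_between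
        y3_mult_at_replicate_Y1)
qed

lemma y3_dual_yz: "y3_dual (2 * j) (yz i k) = (if i = 1 \<and> k = j then 1 else 0)"
proof -
  have "y3_dual (2 * j) (yz i k)
      = (\<Sum>p\<le>2 * j. if p = 0 then (if i = 1 then fa_pow zz k (replicate (2 * j) Y1) else 0) else 0)"
    unfolding y3_dual_def by (intro sum.cong) (auto simp: yz_at_y3_between)
  also have "\<dots> = (if i = 1 then fa_pow zz k (replicate (2 * j) Y1) else 0)"
    by (simp add: sum.delta)
  also have "\<dots> = (if i = 1 \<and> k = j then 1 else 0)"
    by (simp add: fa_pow_zz_at_replicate_Y1)
  finally show ?thesis .
qed

lemma y3_dual_add: "y3_dual n (f + g) = y3_dual n f + y3_dual n g"
  by (simp add: y3_dual_def sum.distrib algebra_simps)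

lemma y3_dual_smul: "y3_dual n (fa_smul c f) = c * y3_dual n f"
  by (simp add: y3_dual_def fa_smul_def sum_distrib_left algebra_simps)

lemma ev_at_replicate_Y1: "ev P (replicate (2 * j) Y1) = coeff (coeff P j) 0"
proof (induction P rule: poly_poly_induct)
  case (add P Q)
  then show ?case by (simp add: ev_add)
qed (simp_all add: ev_monom fa_smul_def yz_at_replicate_Y1 coeff_monom)

lemma y3_dual_ev: "y3_dual (2 * j) (ev P) = coeff (coeff P j) 1"
proof (induction P rule: poly_poly_induct)
  case zero
  show "y3_dual (2 * j) (ev 0) = coeff (coeff 0 j) 1"
    by (simp add: y3_dual_def)
next
  case (add P Q)
  then show "y3_dual (2 * j) (ev (P + Q)) = coeff (coeff (P + Q) j) 1"
    by (simp add: ev_add y3_dual_add)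
next
  case (monom c i k)
  show "y3_dual (2 * j) (ev (monom (monom c i) k)) = coeff (coeff (monom (monom c i) k) j) 1"
    by (simp add: ev_monom y3_dual_smul y3_dual_yz coeff_monom)
qed

lemma coeff_0_1_eq_0_if_ev_in_coboundaries:
  assumes "ev P \<in> coboundaries"
  shows "coeff (coeff P j) 0 = 0" "coeff (coeff P j) 1 = 0"
proof -
  obtain g where "ev P = dfun g"
    using assms unfolding coboundaries_iff by blast
  then show "coeff (coeff P j) 0 = 0" "coeff (coeff P j) 1 = 0"
    using ev_at_replicate_Y1[of P j] y3_dual_ev[of j P]
    by (simp_all add: dfun_at_replicate_Y1 y3_dual_dfun)
qed

lemma square_var_eq_monom: "[:0, 0, 1:] = monom 1 2"
  by (simp add: numeral_2_eq_2 monom_Suc monom_0)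

lemma ev_a_square_mult: "ev ([:[:0, 0, 1:]:] * Q) = dfun (y1 \<odot> ev Q)"
proof -
  have "ev ([:[:0, 0, 1:]:] * Q) = y3 \<odot> (y3 \<odot> ev Q)"
  proof (induction Q rule: poly_poly_induct)
    case zero
    show "ev ([:[:0, 0, 1:]:] * 0) = y3 \<odot> (y3 \<odot> ev 0)"
      by simp
  next
    case (add P Q)
    then show "ev ([:[:0, 0, 1:]:] * (P + Q)) = y3 \<odot> (y3 \<odot> ev (P + Q))"
      by (simp add: distrib_left ev_add fa_mult_add_right)
  next
    case (monom c i k)
    have "[:[:0, 0, 1:]:] = monom (monom (1::'a) 2) 0"
      by (simp add: square_var_eq_monom monom_0)
    then show ?case
      by (simp add: mult_monom ev_monom fa_mult_smul_right yz_def numeral_2_eq_2 fa_pow_Suc fa_mult_assoc)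
  qed
  also have "\<dots> = dfun (y1 \<odot> ev Q)"
    using ev_in_cocycles[of Q]
    by (simp add: dfun_mult_homogeneous[OF homogeneous_y(1)] dfun_y1 fa_mult_assoc cocycles_iff)
  finally show ?thesis .
qed

theorem ev_in_coboundaries_iff:
  fixes P :: "'a::idom poly poly"
  shows "ev P \<in> coboundaries \<longleftrightarrow> [:[:0, 0, 1:]:] dvd P"
proof
  assume "ev P \<in> coboundaries"
  then have "\<forall>k<2. coeff (coeff P j) k = 0" for j
    using coeff_0_1_eq_0_if_ev_in_coboundaries[of P j] by (auto simp: less_Suc_eq numeral_2_eq_2)
  then have "\<forall>j. [:0, 0, 1:] dvd coeff P j"
    by (simp add: square_var_eq_monom monom_1_dvd_iff')
  then show "[:[:0, 0, 1:]:] dvd P"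
    by (simp add: const_poly_dvd_iff)
next
  assume "[:[:0, 0, 1:]:] dvd P"
  then obtain Q where "P = [:[:0, 0, 1:]:] * Q" ..
  then have "ev P = dfun (y1 \<odot> ev Q)"
    by (simp only: ev_a_square_mult)
  then show "ev P \<in> coboundaries"
    using ev_in_cocycles[of Q] by (simp add: dfun_in_coboundaries cocycles_iff)
qed

theorem proposition3p1:
  fixes dummy :: "'a::field_char_0"
  assumes alg_closed: "\<forall>p :: 'a poly. degree p > 0 \<longrightarrow> (\<exists>x. poly p x = 0)"
  shows "(\<forall>P :: 'a poly poly. ev P \<in> cocycles)
       \<and> (\<forall>P Q :: 'a poly poly. fa_diff (ev (P * Q)) (ev P \<odot> ev Q) \<in> coboundaries)
       \<and> (\<forall>c \<in> (cocycles :: 'a fa set). \<exists>P :: 'a poly poly. fa_diff c (ev P) \<in> coboundaries)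
       \<and> (\<forall>P :: 'a poly poly. ev P \<in> coboundaries \<longleftrightarrow> [:[:0, 0, 1:]:] dvd P)"
  unfolding fa_diff_eq_minus
  using ev_in_cocycles ev_mult_mod_coboundaries cocycle_cohomologous_to_ev ev_in_coboundaries_iff
  by blast

end
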